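(* Let $W_1,W_2,\dots$ be graphons on $\Omega$ with $\|W_n-W\|_\square\to0$ for a graphon $W$. Let $A_n,B_n\subseteq\Omega$ be measurable sets with $\int_{A_n\times B_n}W_n\,d\mu^2=0$ for every $n$, and suppose that $\mathbf{1}_{A_n}$ converges weak* to $a\in L^\infty(\Omega)$ and $\mathbf{1}_{B_n}$ converges weak* to $b\in L^\infty(\Omega)$. Then $\int_{\mathrm{supp}(a)\times\mathrm{supp}(b)}W\,d\mu^2=0$.
   Context: $(\Omega,\mu)$ is an atomless standard probability space; a graphon is a symmetric measurable $W:\Omega^2\to[0,1]$. The cut norm is $\|U\|_\square=\sup_{S,T\subseteq\Omega}\left|\int_{S\times T}U\,d\mu^2\right|$. A sequence $g_n\in L^\infty(\Omega)$ converges weak* to $g$ if $\int_X g_n\,d\mu\to\int_X g\,d\mu$ for every measurable $X\subseteq\Omega$. For a measurable function $g$, $\mathrm{supp}(g)=\{x:g(x)\neq0\}$. *)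

theory Defs
  imports "HOL-Probability.Probability"
begin

definition std_atomless_prob_space :: "'a::polish_space measure \<Rightarrow> bool" where
  "std_atomless_prob_space M \<longleftrightarrow> prob_space M \<and> sets M = sets borel
      \<and> (\<forall>x. emeasure M {x} = 0)"

definition graphon :: "'a measure \<Rightarrow> ('a \<times> 'a \<Rightarrow> real) \<Rightarrow> bool" where
  "graphon M W \<longleftrightarrow> W \<in> borel_measurable (M \<Otimes>\<^sub>M M)
      \<and> (\<forall>x\<in>space M. \<forall>y\<in>space M. W (x, y) = W (y, x))
      \<and> (\<forall>x\<in>space M. \<forall>y\<in>space M. 0 \<le> W (x, y) \<and> W (x, y) \<le> 1)"

definition cut_norm :: "'a measure \<Rightarrow> ('a \<times> 'a \<Rightarrow> real) \<Rightarrow> real" where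
  "cut_norm M U = (SUP ST \<in> sets M \<times> sets M.
      \<bar>set_lebesgue_integral (M \<Otimes>\<^sub>M M) (fst ST \<times> snd ST) U\<bar>)"

definition Linfty :: "'a measure \<Rightarrow> ('a \<Rightarrow> real) set" where
  "Linfty M = {g. g \<in> borel_measurable M \<and> (\<exists>C. AE x in M. \<bar>g x\<bar> \<le> C)}"

definition weak_star_conv :: "'a measure \<Rightarrow> (nat \<Rightarrow> 'a \<Rightarrow> real) \<Rightarrow> ('a \<Rightarrow> real) \<Rightarrow> bool" where
  "weak_star_conv M g h \<longleftrightarrow> (\<forall>X\<in>sets M.
      (\<lambda>n. set_lebesgue_integral M X (g n)) \<longlonglongrightarrow> set_lebesgue_integral M X h)"

definition supp :: "('a \<Rightarrow> real) \<Rightarrow> 'a set" where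
  "supp g = {x. g x \<noteq> 0}"

end

theory Submission
  imports Defs
begin

text \<open>Let \<open>T\<^sub>n\<close> be the integral of \<open>W\<close> over \<open>A\<^sub>n \<times> B\<^sub>n\<close>. As \<open>W\<^sub>n\<close> integrates to \<open>0\<close> there,
  \<open>\<bar>T\<^sub>n\<bar>\<close> is at most the cut norm of \<open>W\<^sub>n - W\<close>, so \<open>T\<^sub>n \<longrightarrow> 0\<close>. On the other hand
  \<open>T\<^sub>n = \<integral> 1\<^sub>A\<^sub>n(x) F\<^sub>n(x) dx\<close> with \<open>F\<^sub>n(x) = \<integral> 1\<^sub>B\<^sub>n(y) W(x,y) dy\<close>. Weak* convergence of
  uniformly bounded functions extends from indicators to all integrable test functions, so
  \<open>F\<^sub>n \<longrightarrow> F = \<integral> b(y) W(\<cdot>,y) dy\<close> pointwise, hence in \<open>L\<^sup>1\<close> by dominated convergence, and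
  therefore \<open>T\<^sub>n \<longrightarrow> \<integral>\<integral> a(x) b(y) W(x,y)\<close>. Weak* limits of indicators are nonnegative almost
  everywhere, so the nonnegative function \<open>a(x) b(y) W(x,y)\<close> has integral \<open>0\<close> and vanishes
  almost everywhere, which forces \<open>W = 0\<close> almost everywhere on \<open>supp a \<times> supp b\<close>.\<close>

lemma integrable_bounded_mult:
  fixes c f :: "'a \<Rightarrow> real"
  assumes "c \<in> borel_measurable M" and "AE x in M. \<bar>c x\<bar> \<le> K" and "integrable M f"
  shows "integrable M (\<lambda>x. c x * f x)"
proof (rule Bochner_Integration.integrable_bound)
  show "integrable M (\<lambda>x. K * f x)"
    using assms(3) by simp
  show "AE x in M. norm (c x * f x) \<le> norm (K * f x)"
    using assms(2) by eventually_elim (auto simp: abs_mult intro: mult_right_mono)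
qed (use assms in measurable)

lemma abs_integral_bounded_mult_le:
  fixes c f :: "'a \<Rightarrow> real"
  assumes "c \<in> borel_measurable M" and "AE x in M. \<bar>c x\<bar> \<le> K" and "integrable M f"
  shows "\<bar>\<integral>x. c x * f x \<partial>M\<bar> \<le> K * (\<integral>x. \<bar>f x\<bar> \<partial>M)"
proof -
  have "\<bar>\<integral>x. c x * f x \<partial>M\<bar> \<le> (\<integral>x. \<bar>c x * f x\<bar> \<partial>M)"
    using integral_norm_bound[of M "\<lambda>x. c x * f x"] by simp
  also have "\<dots> \<le> (\<integral>x. K * \<bar>f x\<bar> \<partial>M)"
    using assms(2)
    by (intro integral_mono_AE integrable_abs integrable_bounded_mult[OF assms] integrable_mult_right
        assms(3), eventually_elim) (auto simp: abs_mult intro: mult_right_mono)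
  finally show ?thesis by simp
qed

lemma Linfty_bound:
  assumes "c \<in> Linfty M"
  obtains K where "c \<in> borel_measurable M" and "AE x in M. \<bar>c x\<bar> \<le> K"
  using assms unfolding Linfty_def by auto

lemma Linfty_indicator: "A \<in> sets M \<Longrightarrow> indicator A \<in> Linfty M"
  unfolding Linfty_def by (auto intro!: exI[of _ 1] simp: indicator_def)

lemma Linfty_integrable:
  assumes "finite_measure M" and "c \<in> Linfty M"
  shows "integrable M c"
proof -
  obtain K where "c \<in> borel_measurable M" and "AE x in M. \<bar>c x\<bar> \<le> K"
    using assms(2) by (rule Linfty_bound)
  then show ?thesis
    by (intro finite_measure.integrable_const_bound[OF assms(1)]) auto
qed

lemma LIMSEQ_approximation:
  fixes X :: "nat \<Rightarrow> nat \<Rightarrow> real"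
  assumes "\<And>i. X i \<longlonglongrightarrow> Y i" and "\<And>i n. \<bar>X i n - Z n\<bar> \<le> e i" and "\<And>i. \<bar>Y i - L\<bar> \<le> e i"
    and "e \<longlonglongrightarrow> 0"
  shows "Z \<longlonglongrightarrow> L"
proof (rule LIMSEQ_I)
  fix r :: real assume "0 < r"
  then obtain i where i: "\<bar>e i\<bar> < r / 3"
    using LIMSEQ_D[OF assms(4), of "r / 3"] by auto
  obtain N where N: "\<And>n. n \<ge> N \<Longrightarrow> \<bar>X i n - Y i\<bar> < r / 3"
    using LIMSEQ_D[OF assms(1), of "r / 3"] \<open>0 < r\<close> by auto
  have "\<bar>Z n - L\<bar> < r" if "n \<ge> N" for n
    using N[OF that] assms(2)[of i n] assms(3)[of i] i by linarith
  then show "\<exists>N. \<forall>n\<ge>N. norm (Z n - L) < r" by auto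
qed

lemma weak_star_conv_integral:
  fixes g :: "nat \<Rightarrow> 'a \<Rightarrow> real" and c f :: "'a \<Rightarrow> real"
  assumes g: "\<And>n. g n \<in> borel_measurable M" and g_bound: "\<And>n. AE x in M. \<bar>g n x\<bar> \<le> K"
    and c: "c \<in> Linfty M" and conv: "weak_star_conv M g c" and f: "integrable M f"
  shows "(\<lambda>n. \<integral>x. g n x * f x \<partial>M) \<longlonglongrightarrow> (\<integral>x. c x * f x \<partial>M)"
proof -
  obtain Kc where c_meas: "c \<in> borel_measurable M" and c_bound: "AE x in M. \<bar>c x\<bar> \<le> Kc"
    using c by (rule Linfty_bound)
  from f show ?thesis
  proof induct
    case (base A d)
    have "(\<lambda>n. d * set_lebesgue_integral M A (g n)) \<longlonglongrightarrow> d * set_lebesgue_integral M A c"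
      using conv base(1) unfolding weak_star_conv_def by (simp add: tendsto_mult_left)
    then show ?case
      by (simp add: set_lebesgue_integral_def ac_simps)
  next
    case (add f h)
    have "(\<lambda>n. (\<integral>x. g n x * f x \<partial>M) + (\<integral>x. g n x * h x \<partial>M))
        \<longlonglongrightarrow> (\<integral>x. c x * f x \<partial>M) + (\<integral>x. c x * h x \<partial>M)"
      using add(2,4) by (rule tendsto_add)
    then show ?case
      using add(1,3)
      by (simp add: distrib_left integrable_bounded_mult[OF g g_bound]
          integrable_bounded_mult[OF c_meas c_bound])
  next
    case (lim f s)
    \<comment> \<open>The functionals \<open>f \<mapsto> \<integral> g n * f\<close> and \<open>f \<mapsto> \<integral> c * f\<close> are uniformly Lipschitz
      in the \<open>L\<^sup>1\<close> norm, so convergence passes to the \<open>L\<^sup>1\<close>-limit \<open>f\<close> of the \<open>s i\<close>.\<close>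
    define e where "e i = max K Kc * (\<integral>x. \<bar>s i x - f x\<bar> \<partial>M)" for i
    have s_f: "integrable M (\<lambda>x. s i x - f x)" for i
      using lim(1,5) by simp
    have "(\<lambda>i. \<integral>x. \<bar>s i x - f x\<bar> \<partial>M) \<longlonglongrightarrow> (\<integral>x. 0 \<partial>M)"
    proof (rule integral_dominated_convergence[where w="\<lambda>x. 3 * \<bar>f x\<bar>"])
      show "AE x in M. (\<lambda>i. \<bar>s i x - f x\<bar>) \<longlonglongrightarrow> 0"
        using lim(3) by (intro AE_I2) (metis LIM_zero tendsto_rabs_zero)
      show "AE x in M. norm \<bar>s i x - f x\<bar> \<le> 3 * \<bar>f x\<bar>" for i
        using lim(4) by (intro AE_I2) (smt (verit) real_norm_def)
    qed (use lim(1,5) in auto)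
    then have e_0: "e \<longlonglongrightarrow> 0"
      unfolding e_def by (simp add: tendsto_mult_right_zero)
    have g_approx: "\<bar>(\<integral>x. g n x * s i x \<partial>M) - (\<integral>x. g n x * f x \<partial>M)\<bar> \<le> e i" for n i
    proof -
      have "AE x in M. \<bar>g n x\<bar> \<le> max K Kc"
        using g_bound[of n] by eventually_elim auto
      from abs_integral_bounded_mult_le[OF g this s_f]
      show ?thesis
        using lim(1,5) by (simp add: e_def right_diff_distrib integrable_bounded_mult[OF g g_bound])
    qed
    have c_approx: "\<bar>(\<integral>x. c x * s i x \<partial>M) - (\<integral>x. c x * f x \<partial>M)\<bar> \<le> e i" for i
    proof -
      have "AE x in M. \<bar>c x\<bar> \<le> max K Kc"
        using c_bound by eventually_elim auto
      from abs_integral_bounded_mult_le[OF c_meas this s_f]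
      show ?thesis
        using lim(1,5) by (simp add: e_def right_diff_distrib integrable_bounded_mult[OF c_meas c_bound])
    qed
    show ?case
      by (rule LIMSEQ_approximation[OF lim(2) g_approx c_approx e_0])
  qed
qed

lemma weak_star_conv_integral_L1:
  fixes g u :: "nat \<Rightarrow> 'a \<Rightarrow> real" and c f :: "'a \<Rightarrow> real"
  assumes g: "\<And>n. g n \<in> borel_measurable M" and g_bound: "\<And>n. AE x in M. \<bar>g n x\<bar> \<le> K"
    and c: "c \<in> Linfty M" and conv: "weak_star_conv M g c"
    and u: "\<And>n. integrable M (u n)" and f: "integrable M f"
    and L1: "(\<lambda>n. \<integral>x. \<bar>u n x - f x\<bar> \<partial>M) \<longlonglongrightarrow> 0"
  shows "(\<lambda>n. \<integral>x. g n x * u n x \<partial>M) \<longlonglongrightarrow> (\<integral>x. c x * f x \<partial>M)"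
proof -
  have u_f: "integrable M (\<lambda>x. u n x - f x)" for n
    using u f by simp
  have "(\<lambda>n. \<integral>x. g n x * (u n x - f x) \<partial>M) \<longlonglongrightarrow> 0"
  proof (rule Lim_null_comparison)
    show "(\<lambda>n. K * (\<integral>x. \<bar>u n x - f x\<bar> \<partial>M)) \<longlonglongrightarrow> 0"
      using L1 by (rule tendsto_mult_right_zero)
    show "\<forall>\<^sub>F n in sequentially. norm (\<integral>x. g n x * (u n x - f x) \<partial>M)
        \<le> K * (\<integral>x. \<bar>u n x - f x\<bar> \<partial>M)"
      using abs_integral_bounded_mult_le[OF g g_bound u_f] by simp
  qed
  then have "(\<lambda>n. (\<integral>x. g n x * (u n x - f x) \<partial>M) + (\<integral>x. g n x * f x \<partial>M))
      \<longlonglongrightarrow> 0 + (\<integral>x. c x * f x \<partial>M)"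
    by (intro tendsto_add weak_star_conv_integral[OF g g_bound c conv f])
  then show ?thesis
    using u f
    by (simp add: right_diff_distrib integrable_bounded_mult[OF g g_bound])
qed

lemma weak_star_conv_nonneg:
  fixes g :: "nat \<Rightarrow> 'a \<Rightarrow> real" and c :: "'a \<Rightarrow> real"
  assumes g_nonneg: "\<And>n x. x \<in> space M \<Longrightarrow> 0 \<le> g n x" and c: "integrable M c"
    and conv: "weak_star_conv M g c"
  shows "AE x in M. 0 \<le> c x"
proof -
  define X where "X = {x \<in> space M. c x < 0}"
  have X: "X \<in> sets M"
    using c unfolding X_def by measurable
  have "(\<lambda>n. set_lebesgue_integral M X (g n)) \<longlonglongrightarrow> set_lebesgue_integral M X c"
    using conv X unfolding weak_star_conv_def by blast
  moreover have "0 \<le> set_lebesgue_integral M X (g n)" for n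
    unfolding set_lebesgue_integral_def
    using g_nonneg by (intro integral_nonneg_AE AE_I2) (simp add: indicator_def)
  ultimately have "(\<integral>x. - (indicator X x * c x) \<partial>M) \<le> 0"
    unfolding set_lebesgue_integral_def by (simp add: LIMSEQ_le_const)
  moreover have h_nonneg: "AE x in M. 0 \<le> - (indicator X x * c x)"
    by (intro AE_I2) (simp add: X_def indicator_def)
  moreover have h: "integrable M (\<lambda>x. - (indicator X x * c x))"
    using integrable_real_mult_indicator[OF X c] by (simp add: mult.commute)
  ultimately have "AE x in M. - (indicator X x * c x) = 0"
    using integral_nonneg_AE[OF h_nonneg] integral_nonneg_eq_0_iff_AE[OF h h_nonneg] by linarith
  then show ?thesis
    by (rule AE_mp) (intro AE_I2, simp add: X_def indicator_def)
qed

lemma weak_star_conv_kernel: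
  fixes g h :: "nat \<Rightarrow> 'a \<Rightarrow> real" and c d :: "'a \<Rightarrow> real" and W :: "'a \<times> 'a \<Rightarrow> real"
  assumes "finite_measure M"
    and g: "\<And>n. g n \<in> borel_measurable M" and g_bound: "\<And>n. AE x in M. \<bar>g n x\<bar> \<le> K"
    and c: "c \<in> Linfty M" and g_c: "weak_star_conv M g c"
    and h[measurable]: "\<And>n. h n \<in> borel_measurable M" and h_bound: "\<And>n. AE y in M. \<bar>h n y\<bar> \<le> K"
    and d: "d \<in> Linfty M" and h_d: "weak_star_conv M h d"
    and W[measurable]: "W \<in> borel_measurable (M \<Otimes>\<^sub>M M)"
    and W_bound: "\<And>x y. x \<in> space M \<Longrightarrow> y \<in> space M \<Longrightarrow> \<bar>W (x, y)\<bar> \<le> B"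
  shows "(\<lambda>n. \<integral>x. g n x * (\<integral>y. h n y * W (x, y) \<partial>M) \<partial>M)
    \<longlonglongrightarrow> (\<integral>x. c x * (\<integral>y. d y * W (x, y) \<partial>M) \<partial>M)"
proof -
  interpret finite_measure M by fact
  have d_meas[measurable]: "d \<in> borel_measurable M"
    using d unfolding Linfty_def by simp
  define F where "F n x = (\<integral>y. h n y * W (x, y) \<partial>M)" for n x
  define G where "G x = (\<integral>y. d y * W (x, y) \<partial>M)" for x
  define D where "D = \<bar>K\<bar> * (B * measure M (space M))"
  have F_meas: "F n \<in> borel_measurable M" for n
    unfolding F_def by measurable
  have G_meas: "G \<in> borel_measurable M"
    unfolding G_def by measurable
  have W_x: "integrable M (\<lambda>y. W (x, y))" if "x \<in> space M" for x
    using W_bound that by (intro integrable_const_bound[where B=B] AE_I2) (auto intro: measurable_Pair2[OF W])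
  have F_G: "(\<lambda>n. F n x) \<longlonglongrightarrow> G x" if "x \<in> space M" for x
    unfolding F_def G_def using weak_star_conv_integral[OF h h_bound d h_d W_x[OF that]] .
  have F_bound: "\<bar>F n x\<bar> \<le> D" if "x \<in> space M" for n x
  proof -
    have "K * (\<integral>y. \<bar>W (x, y)\<bar> \<partial>M) \<le> \<bar>K\<bar> * (\<integral>y. \<bar>W (x, y)\<bar> \<partial>M)"
      by (intro mult_right_mono) auto
    also have "\<dots> \<le> \<bar>K\<bar> * (\<integral>y. B \<partial>M)"
      using W_x[OF that] W_bound that by (intro mult_left_mono integral_mono) auto
    also have "\<dots> = D"
      by (simp add: D_def mult.commute)
    finally have "K * (\<integral>y. \<bar>W (x, y)\<bar> \<partial>M) \<le> D" .
    then show ?thesis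
      unfolding F_def using abs_integral_bounded_mult_le[OF h[of n] h_bound[of n] W_x[OF that]] by linarith
  qed
  have G_bound: "\<bar>G x\<bar> \<le> D" if "x \<in> space M" for x
    using F_bound that by (intro LIMSEQ_le_const2[OF tendsto_rabs[OF F_G]]) auto
  have F_int: "integrable M (F n)" for n
    using F_bound by (intro integrable_const_bound[where B=D] AE_I2 F_meas) auto
  have G_int: "integrable M G"
    using G_bound by (intro integrable_const_bound[where B=D] AE_I2 G_meas) auto
  have "(\<lambda>n. \<integral>x. \<bar>F n x - G x\<bar> \<partial>M) \<longlonglongrightarrow> (\<integral>x. 0 \<partial>M)"
  proof (rule integral_dominated_convergence[where w="\<lambda>x. 2 * D"])
    show "AE x in M. (\<lambda>n. \<bar>F n x - G x\<bar>) \<longlonglongrightarrow> 0"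
      using F_G by (intro AE_I2) (metis LIM_zero tendsto_rabs_zero)
    show "AE x in M. norm \<bar>F n x - G x\<bar> \<le> 2 * D" for n
      using F_bound G_bound by (intro AE_I2) (smt (verit) real_norm_def)
  qed (use F_meas G_meas in auto)
  then have "(\<lambda>n. \<integral>x. \<bar>F n x - G x\<bar> \<partial>M) \<longlonglongrightarrow> 0"
    by simp
  from weak_star_conv_integral_L1[OF g g_bound c g_c F_int G_int this]
  show ?thesis
    unfolding F_def G_def .
qed

context
  fixes M :: "'a measure" and c d :: "'a \<Rightarrow> real" and W :: "'a \<times> 'a \<Rightarrow> real" and B :: real
  assumes M: "finite_measure M" and c: "c \<in> Linfty M" and d: "d \<in> Linfty M"
    and W[measurable]: "W \<in> borel_measurable (M \<Otimes>\<^sub>M M)"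
    and W_bound: "\<And>x y. x \<in> space M \<Longrightarrow> y \<in> space M \<Longrightarrow> \<bar>W (x, y)\<bar> \<le> B"
begin

lemma integrable_pair_kernel:
  "integrable (M \<Otimes>\<^sub>M M) (\<lambda>z. c (fst z) * d (snd z) * W z)"
proof -
  interpret M: finite_measure M by (rule M)
  interpret pair_sigma_finite M M
    by (simp add: pair_sigma_finite_def M.sigma_finite_measure_axioms)
  interpret N: finite_measure "M \<Otimes>\<^sub>M M"
    by (rule finite_measure_pair_measure[OF M M])
  obtain Kc where [measurable]: "c \<in> borel_measurable M" and Kc: "AE x in M. \<bar>c x\<bar> \<le> Kc"
    using c by (rule Linfty_bound)
  obtain Kd where [measurable]: "d \<in> borel_measurable M" and Kd: "AE y in M. \<bar>d y\<bar> \<le> Kd"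
    using d by (rule Linfty_bound)
  have "AE x in M. AE y in M. \<bar>c x\<bar> \<le> Kc \<and> \<bar>d y\<bar> \<le> Kd"
    using Kc
  proof eventually_elim
    case (elim x)
    from Kd show ?case
      by eventually_elim (use elim in simp)
  qed
  then have "AE z in M \<Otimes>\<^sub>M M. \<bar>c (fst z)\<bar> \<le> Kc \<and> \<bar>d (snd z)\<bar> \<le> Kd"
    by (subst AE_pair_iff[symmetric]) measurable
  then have "AE z in M \<Otimes>\<^sub>M M. norm (c (fst z) * d (snd z) * W z) \<le> Kc * Kd * B"
    using AE_space
  proof eventually_elim
    case (elim z)
    then have "\<bar>W z\<bar> \<le> B"
      using W_bound[of "fst z" "snd z"] by (auto simp: space_pair_measure)
    with elim show ?case
      by (auto simp: abs_mult intro!: mult_mono)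
  qed
  then show ?thesis
    by (intro N.integrable_const_bound) measurable
qed

lemma integral_pair_kernel_iterated:
  "(\<integral>z. c (fst z) * d (snd z) * W z \<partial>(M \<Otimes>\<^sub>M M))
    = (\<integral>x. c x * (\<integral>y. d y * W (x, y) \<partial>M) \<partial>M)"
proof -
  interpret M: finite_measure M by (rule M)
  interpret pair_sigma_finite M M
    by (simp add: pair_sigma_finite_def M.sigma_finite_measure_axioms)
  show ?thesis
    using integral_fst'[OF integrable_pair_kernel] by (simp add: mult.assoc)
qed

end

lemma weak_star_conv_rectangle_integrals:
  fixes A B :: "nat \<Rightarrow> 'a set" and a b :: "'a \<Rightarrow> real" and W :: "'a \<times> 'a \<Rightarrow> real"
  assumes M: "finite_measure M" and A: "\<And>n. A n \<in> sets M" and B: "\<And>n. B n \<in> sets M"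
    and a: "a \<in> Linfty M" and A_a: "weak_star_conv M (\<lambda>n. indicator (A n)) a"
    and b: "b \<in> Linfty M" and B_b: "weak_star_conv M (\<lambda>n. indicator (B n)) b"
    and W: "W \<in> borel_measurable (M \<Otimes>\<^sub>M M)"
    and W_bound: "\<And>x y. x \<in> space M \<Longrightarrow> y \<in> space M \<Longrightarrow> \<bar>W (x, y)\<bar> \<le> C"
  shows "(\<lambda>n. set_lebesgue_integral (M \<Otimes>\<^sub>M M) (A n \<times> B n) W)
    \<longlonglongrightarrow> (\<integral>z. a (fst z) * b (snd z) * W z \<partial>(M \<Otimes>\<^sub>M M))"
proof -
  have rectangle: "set_lebesgue_integral (M \<Otimes>\<^sub>M M) (A n \<times> B n) W
      = (\<integral>x. indicator (A n) x * (\<integral>y. indicator (B n) y * W (x, y) \<partial>M) \<partial>M)" for n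
    using integral_pair_kernel_iterated[OF M Linfty_indicator Linfty_indicator W W_bound, OF A B]
    by (simp add: set_lebesgue_integral_def indicator_times)
  have "(\<lambda>n. set_lebesgue_integral (M \<Otimes>\<^sub>M M) (A n \<times> B n) W)
      \<longlonglongrightarrow> (\<integral>x. a x * (\<integral>y. b y * W (x, y) \<partial>M) \<partial>M)"
    unfolding rectangle
    by (rule weak_star_conv_kernel[OF M _ _ a A_a _ _ b B_b W W_bound, where K=1])
      (auto intro: borel_measurable_indicator A B)
  also have "(\<integral>x. a x * (\<integral>y. b y * W (x, y) \<partial>M) \<partial>M)
      = (\<integral>z. a (fst z) * b (snd z) * W z \<partial>(M \<Otimes>\<^sub>M M))"
    by (rule integral_pair_kernel_iterated[OF M a b W W_bound, symmetric])
  finally show ?thesis .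
qed

lemma abs_set_integral_rectangle_le_cut_norm:
  fixes U :: "'a \<times> 'a \<Rightarrow> real"
  assumes U: "integrable (M \<Otimes>\<^sub>M M) U" and "S \<in> sets M" and "T \<in> sets M"
  shows "\<bar>set_lebesgue_integral (M \<Otimes>\<^sub>M M) (S \<times> T) U\<bar> \<le> cut_norm M U"
  unfolding cut_norm_def
proof (rule cSUP_upper2)
  show "\<bar>set_lebesgue_integral (M \<Otimes>\<^sub>M M) (S \<times> T) U\<bar>
      \<le> \<bar>set_lebesgue_integral (M \<Otimes>\<^sub>M M) (fst (S, T) \<times> snd (S, T)) U\<bar>"
    by simp
  have "\<bar>set_lebesgue_integral (M \<Otimes>\<^sub>M M) (fst ST \<times> snd ST) U\<bar> \<le> (\<integral>z. \<bar>U z\<bar> \<partial>(M \<Otimes>\<^sub>M M))"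
    if "ST \<in> sets M \<times> sets M" for ST
  proof -
    have R: "fst ST \<times> snd ST \<in> sets (M \<Otimes>\<^sub>M M)"
      using that by auto
    have "\<bar>set_lebesgue_integral (M \<Otimes>\<^sub>M M) (fst ST \<times> snd ST) U\<bar>
        \<le> (\<integral>z. \<bar>indicator (fst ST \<times> snd ST) z * U z\<bar> \<partial>(M \<Otimes>\<^sub>M M))"
      unfolding set_lebesgue_integral_def
      using integral_norm_bound[of "M \<Otimes>\<^sub>M M" "\<lambda>z. indicator (fst ST \<times> snd ST) z *\<^sub>R U z"]
      by simp
    also have "\<dots> \<le> (\<integral>z. \<bar>U z\<bar> \<partial>(M \<Otimes>\<^sub>M M))"
      using integrable_mult_indicator[OF R U] U
      by (intro integral_mono) (auto simp: indicator_def)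
    finally show ?thesis .
  qed
  then show "bdd_above ((\<lambda>ST. \<bar>set_lebesgue_integral (M \<Otimes>\<^sub>M M) (fst ST \<times> snd ST) U\<bar>) ` (sets M \<times> sets M))"
    by (rule bdd_aboveI2)
qed (use assms in auto)

lemma cut_norm_tendsto_0_imp_rectangle_integrals:
  fixes U :: "nat \<Rightarrow> 'a \<times> 'a \<Rightarrow> real" and V :: "'a \<times> 'a \<Rightarrow> real"
  assumes U: "\<And>n. integrable (M \<Otimes>\<^sub>M M) (U n)" and V: "integrable (M \<Otimes>\<^sub>M M) V"
    and cut: "(\<lambda>n. cut_norm M (\<lambda>z. U n z - V z)) \<longlonglongrightarrow> 0"
    and S: "\<And>n. S n \<in> sets M" and T: "\<And>n. T n \<in> sets M"
  shows "(\<lambda>n. set_lebesgue_integral (M \<Otimes>\<^sub>M M) (S n \<times> T n) (U n)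
      - set_lebesgue_integral (M \<Otimes>\<^sub>M M) (S n \<times> T n) V) \<longlonglongrightarrow> 0"
proof (rule Lim_null_comparison[OF always_eventually cut], intro allI)
  fix n
  have "S n \<times> T n \<in> sets (M \<Otimes>\<^sub>M M)"
    using S T by simp
  then have "set_integrable (M \<Otimes>\<^sub>M M) (S n \<times> T n) (U n)"
    and "set_integrable (M \<Otimes>\<^sub>M M) (S n \<times> T n) V"
    unfolding set_integrable_def using U V by (blast intro: integrable_mult_indicator)+
  then have "set_lebesgue_integral (M \<Otimes>\<^sub>M M) (S n \<times> T n) (U n)
      - set_lebesgue_integral (M \<Otimes>\<^sub>M M) (S n \<times> T n) V
      = set_lebesgue_integral (M \<Otimes>\<^sub>M M) (S n \<times> T n) (\<lambda>z. U n z - V z)"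
    by (rule set_integral_diff(2)[symmetric])
  then show "norm (set_lebesgue_integral (M \<Otimes>\<^sub>M M) (S n \<times> T n) (U n)
      - set_lebesgue_integral (M \<Otimes>\<^sub>M M) (S n \<times> T n) V) \<le> cut_norm M (\<lambda>z. U n z - V z)"
    using abs_set_integral_rectangle_le_cut_norm[OF _ S T] U V by simp
qed

lemma set_integral_supp_times_supp_eq_0:
  fixes c d :: "'a \<Rightarrow> real" and W :: "'a \<times> 'a \<Rightarrow> real"
  assumes "sigma_finite_measure M"
    and c[measurable]: "c \<in> borel_measurable M" and c_nonneg: "AE x in M. 0 \<le> c x"
    and d[measurable]: "d \<in> borel_measurable M" and d_nonneg: "AE y in M. 0 \<le> d y"
    and W_nonneg: "\<And>x y. x \<in> space M \<Longrightarrow> y \<in> space M \<Longrightarrow> 0 \<le> W (x, y)"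
    and int: "integrable (M \<Otimes>\<^sub>M M) (\<lambda>z. c (fst z) * d (snd z) * W z)"
    and zero: "(\<integral>z. c (fst z) * d (snd z) * W z \<partial>(M \<Otimes>\<^sub>M M)) = 0"
  shows "set_lebesgue_integral (M \<Otimes>\<^sub>M M) (supp c \<times> supp d) W = 0"
proof -
  interpret pair_sigma_finite M M
    by (simp add: pair_sigma_finite_def assms(1))
  have "AE x in M. AE y in M. 0 \<le> c x \<and> 0 \<le> d y"
    using c_nonneg
  proof eventually_elim
    case (elim x)
    from d_nonneg show ?case
      by eventually_elim (use elim in simp)
  qed
  then have "AE z in M \<Otimes>\<^sub>M M. 0 \<le> c (fst z) \<and> 0 \<le> d (snd z)"
    by (subst AE_pair_iff[symmetric]) measurable
  then have "AE z in M \<Otimes>\<^sub>M M. 0 \<le> c (fst z) * d (snd z) * W z"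
    using AE_space by eventually_elim (auto simp: W_nonneg space_pair_measure)
  then have "AE z in M \<Otimes>\<^sub>M M. c (fst z) * d (snd z) * W z = 0"
    using integral_nonneg_eq_0_iff_AE[OF int] zero by simp
  then have "AE z in M \<Otimes>\<^sub>M M. indicator (supp c \<times> supp d) z *\<^sub>R W z = 0"
    by eventually_elim (auto simp: supp_def indicator_def)
  then show ?thesis
    unfolding set_lebesgue_integral_def by (rule integral_eq_zero_AE)
qed

lemma graphon_integrable:
  assumes "finite_measure M" and "graphon M W"
  shows "integrable (M \<Otimes>\<^sub>M M) W"
  using assms(2) unfolding graphon_def
  by (intro finite_measure.integrable_const_bound[OF finite_measure_pair_measure[OF assms(1,1)], where B=1])
    (auto simp: space_pair_measure)

theorem claim4p3:
  fixes M :: "'a::polish_space measure"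
    and Wn :: "nat \<Rightarrow> 'a \<times> 'a \<Rightarrow> real" and W :: "'a \<times> 'a \<Rightarrow> real"
    and A B :: "nat \<Rightarrow> 'a set" and a b :: "'a \<Rightarrow> real"
  assumes "std_atomless_prob_space M"
    and "\<And>n. graphon M (Wn n)" and "graphon M W"
    and "(\<lambda>n. cut_norm M (\<lambda>z. Wn n z - W z)) \<longlonglongrightarrow> 0"
    and "\<And>n. A n \<in> sets M" and "\<And>n. B n \<in> sets M"
    and "\<And>n. set_lebesgue_integral (M \<Otimes>\<^sub>M M) (A n \<times> B n) (Wn n) = 0"
    and "a \<in> Linfty M" and "b \<in> Linfty M"
    and "weak_star_conv M (\<lambda>n. indicator (A n)) a"
    and "weak_star_conv M (\<lambda>n. indicator (B n)) b"
  shows "set_lebesgue_integral (M \<Otimes>\<^sub>M M) (supp a \<times> supp b) W = 0"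
proof -
  have M: "finite_measure M"
    using assms(1) unfolding std_atomless_prob_space_def prob_space_def by simp
  have W_meas: "W \<in> borel_measurable (M \<Otimes>\<^sub>M M)"
    and W_01: "\<And>x y. x \<in> space M \<Longrightarrow> y \<in> space M \<Longrightarrow> 0 \<le> W (x, y) \<and> W (x, y) \<le> 1"
    using assms(3) unfolding graphon_def by auto
  have "(\<lambda>n. set_lebesgue_integral (M \<Otimes>\<^sub>M M) (A n \<times> B n) W)
      \<longlonglongrightarrow> (\<integral>z. a (fst z) * b (snd z) * W z \<partial>(M \<Otimes>\<^sub>M M))"
    using W_01
    by (intro weak_star_conv_rectangle_integrals[where C=1, OF M assms(5,6,8,10,9,11) W_meas]) auto
  moreover have "(\<lambda>n. set_lebesgue_integral (M \<Otimes>\<^sub>M M) (A n \<times> B n) W) \<longlonglongrightarrow> 0"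
    using cut_norm_tendsto_0_imp_rectangle_integrals[where S=A and T=B, OF graphon_integrable[OF M assms(2)]
        graphon_integrable[OF M assms(3)] assms(4-6)]
    by (simp add: assms(7) tendsto_minus_cancel_left[symmetric])
  ultimately have "(\<integral>z. a (fst z) * b (snd z) * W z \<partial>(M \<Otimes>\<^sub>M M)) = 0"
    by (rule LIMSEQ_unique)
  moreover have "AE x in M. 0 \<le> a x"
    by (rule weak_star_conv_nonneg[OF _ Linfty_integrable[OF M assms(8)] assms(10)]) simp
  moreover have "AE y in M. 0 \<le> b y"
    by (rule weak_star_conv_nonneg[OF _ Linfty_integrable[OF M assms(9)] assms(11)]) simp
  ultimately show ?thesis
    using M assms(8,9) W_01
    by (intro set_integral_supp_times_supp_eq_0 integrable_pair_kernel[OF M assms(8,9) W_meas, where B=1])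
      (auto simp: Linfty_def finite_measure.sigma_finite_measure)
qed

end
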